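(* Let $S=(\mathcal{E},\Sigma,X,\mathcal{O})$ be a d-classical entity, so each $O(e,p)=\{x(e,p)\}$ is a singleton. Then for every $A\subseteq X$: $eig(A)=\{(e,p):x(e,p)\in A\}$, and $eig(X\setminus A)=(\mathcal{E}\times\Sigma)\setminus eig(A)=eig(A)^\perp$. Moreover $\mathcal{Y}_{eig}=\mathcal{Y}_{orth}$.
   Context: An entity $S=(\mathcal{E},\Sigma,X,\mathcal{O})$ consists of sets $\mathcal{E},\Sigma$ and for each $e\in\mathcal{E},p\in\Sigma$ a nonempty set $O(e,p)$, with $X=\bigcup O(e,p)$. It is d-classical iff every $O(e,p)$ is a singleton. The central eigen map is $(e,p)\in eig(A)\iff O(e,p)\subseteq A$; $\mathcal{Y}_{eig}=\{eig(A):A\subseteq X\}$. On $\mathcal{E}\times\Sigma$, $(e,p)\perp(f,q)$ iff $O(e,p)\cap O(f,q)=\emptyset$; for $K\subseteq\mathcal{E}\times\Sigma$, $K^\perp=\{a: a\perp b\text{ for all } b\in K\}$; $\mathcal{Y}_{orth}$ is the set of $K$ with $K=(K^\perp)^\perp$. *)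

theory Defs
  imports Main
begin

definition entity :: "'e set \<Rightarrow> 'p set \<Rightarrow> ('e \<Rightarrow> 'p \<Rightarrow> 'x set) \<Rightarrow> bool" where
  "entity Ent Sig Out \<longleftrightarrow> (\<forall>e\<in>Ent. \<forall>p\<in>Sig. Out e p \<noteq> {})"

definition outcomes :: "'e set \<Rightarrow> 'p set \<Rightarrow> ('e \<Rightarrow> 'p \<Rightarrow> 'x set) \<Rightarrow> 'x set" where
  "outcomes Ent Sig Out = (\<Union>e\<in>Ent. \<Union>p\<in>Sig. Out e p)"

definition d_classical :: "'e set \<Rightarrow> 'p set \<Rightarrow> ('e \<Rightarrow> 'p \<Rightarrow> 'x set) \<Rightarrow> bool" where
  "d_classical Ent Sig Out \<longleftrightarrow> (\<forall>e\<in>Ent. \<forall>p\<in>Sig. \<exists>x. Out e p = {x})"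

definition eig :: "'e set \<Rightarrow> 'p set \<Rightarrow> ('e \<Rightarrow> 'p \<Rightarrow> 'x set) \<Rightarrow> 'x set \<Rightarrow> ('e \<times> 'p) set" where
  "eig Ent Sig Out A = {(e, p). e \<in> Ent \<and> p \<in> Sig \<and> Out e p \<subseteq> A}"

definition Y_eig :: "'e set \<Rightarrow> 'p set \<Rightarrow> ('e \<Rightarrow> 'p \<Rightarrow> 'x set) \<Rightarrow> ('e \<times> 'p) set set" where
  "Y_eig Ent Sig Out = {eig Ent Sig Out A | A. A \<subseteq> outcomes Ent Sig Out}"

definition orthog :: "('e \<Rightarrow> 'p \<Rightarrow> 'x set) \<Rightarrow> 'e \<times> 'p \<Rightarrow> 'e \<times> 'p \<Rightarrow> bool" where
  "orthog Out a b \<longleftrightarrow> Out (fst a) (snd a) \<inter> Out (fst b) (snd b) = {}"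

definition perp :: "'e set \<Rightarrow> 'p set \<Rightarrow> ('e \<Rightarrow> 'p \<Rightarrow> 'x set) \<Rightarrow> ('e \<times> 'p) set \<Rightarrow> ('e \<times> 'p) set" where
  "perp Ent Sig Out K = {a \<in> Ent \<times> Sig. \<forall>b\<in>K. orthog Out a b}"

definition Y_orth :: "'e set \<Rightarrow> 'p set \<Rightarrow> ('e \<Rightarrow> 'p \<Rightarrow> 'x set) \<Rightarrow> ('e \<times> 'p) set set" where
  "Y_orth Ent Sig Out = {K. K \<subseteq> Ent \<times> Sig \<and> K = perp Ent Sig Out (perp Ent Sig Out K)}"

end

theory Submission
  imports Defs
begin

text \<open>In a d-classical entity every pair (e, p) has a single outcome x(e, p), so eig A is the
  preimage of A under x, and two pairs are orthogonal iff their outcomes differ.  Hence the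
  orthocomplement of any K is the eigen set of the outcomes missed by K.  In particular
  eig A has orthocomplement eig (X - A), so eigen sets are biorthogonally closed; conversely a
  closed K is the orthocomplement of a set, hence an eigen set.\<close>

lemma mem_Out_iff_the_elem:
  assumes "d_classical Ent Sig Out" "e \<in> Ent" "p \<in> Sig"
  shows "x \<in> Out e p \<longleftrightarrow> x = the_elem (Out e p)"
  using assms unfolding d_classical_def by fastforce

lemma the_elem_in_outcomes:
  assumes "d_classical Ent Sig Out" "e \<in> Ent" "p \<in> Sig"
  shows "the_elem (Out e p) \<in> outcomes Ent Sig Out"
  using mem_Out_iff_the_elem[OF assms] assms(2,3) unfolding outcomes_def by blast

lemma eig_Int_outcomes: "eig Ent Sig Out (A \<inter> outcomes Ent Sig Out) = eig Ent Sig Out A"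
  unfolding eig_def outcomes_def by blast

lemma eig_d_classical:
  assumes "d_classical Ent Sig Out"
  shows "eig Ent Sig Out A = {(e, p). e \<in> Ent \<and> p \<in> Sig \<and> the_elem (Out e p) \<in> A}"
  unfolding eig_def using mem_Out_iff_the_elem[OF assms] by auto

lemma eig_Diff_d_classical:
  assumes "d_classical Ent Sig Out"
  shows "eig Ent Sig Out (outcomes Ent Sig Out - A) = (Ent \<times> Sig) - eig Ent Sig Out A"
  unfolding eig_d_classical[OF assms] using the_elem_in_outcomes[OF assms] by blast

lemma perp_d_classical:
  assumes "d_classical Ent Sig Out"
  shows "perp Ent Sig Out K =
    eig Ent Sig Out (outcomes Ent Sig Out - (\<Union>b\<in>K. Out (fst b) (snd b)))"
  unfolding perp_def orthog_def eig_d_classical[OF assms]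
  using mem_Out_iff_the_elem[OF assms] the_elem_in_outcomes[OF assms] by (auto simp: disjoint_iff)

lemma perp_eig_d_classical:
  assumes "d_classical Ent Sig Out"
  shows "perp Ent Sig Out (eig Ent Sig Out A) = eig Ent Sig Out (outcomes Ent Sig Out - A)"
proof -
  have "perp Ent Sig Out (eig Ent Sig Out A) = (Ent \<times> Sig) - eig Ent Sig Out A"
    unfolding perp_def orthog_def eig_d_classical[OF assms]
    using mem_Out_iff_the_elem[OF assms] by (auto simp: disjoint_iff) blast
  then show ?thesis
    unfolding eig_Diff_d_classical[OF assms] .
qed

lemma Y_eig_eq_Y_orth:
  assumes "d_classical Ent Sig Out"
  shows "Y_eig Ent Sig Out = Y_orth Ent Sig Out"
proof (intro equalityI subsetI)
  fix K assume "K \<in> Y_eig Ent Sig Out"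
  then obtain A where K: "K = eig Ent Sig Out A" unfolding Y_eig_def by blast
  have "perp Ent Sig Out (perp Ent Sig Out K) =
      eig Ent Sig Out (outcomes Ent Sig Out - (outcomes Ent Sig Out - A))"
    unfolding K perp_eig_d_classical[OF assms] ..
  also have "\<dots> = K"
    using eig_Int_outcomes unfolding K by (metis Diff_Diff_Int inf_commute)
  finally show "K \<in> Y_orth Ent Sig Out"
    unfolding Y_orth_def K eig_def by auto
next
  fix K assume "K \<in> Y_orth Ent Sig Out"
  then have "K = perp Ent Sig Out (perp Ent Sig Out K)" unfolding Y_orth_def by blast
  then show "K \<in> Y_eig Ent Sig Out"
    unfolding Y_eig_def perp_d_classical[OF assms, of "perp Ent Sig Out K"] by blast
qed

theorem mainTheorem8:
  fixes Ent :: "'e set" and Sig :: "'p set" and Out :: "'e \<Rightarrow> 'p \<Rightarrow> 'x set"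
  assumes "entity Ent Sig Out"
    and "d_classical Ent Sig Out"
  shows "(\<forall>A. A \<subseteq> outcomes Ent Sig Out \<longrightarrow>
            eig Ent Sig Out A = {(e, p). e \<in> Ent \<and> p \<in> Sig \<and> the_elem (Out e p) \<in> A}
          \<and> eig Ent Sig Out (outcomes Ent Sig Out - A) = (Ent \<times> Sig) - eig Ent Sig Out A
          \<and> (Ent \<times> Sig) - eig Ent Sig Out A = perp Ent Sig Out (eig Ent Sig Out A))
         \<and> Y_eig Ent Sig Out = Y_orth Ent Sig Out"
  \<comment> \<open>Nonemptiness of the outcome sets is implied by d-classicality.\<close>
  using eig_d_classical[OF assms(2)] eig_Diff_d_classical[OF assms(2)]
    perp_eig_d_classical[OF assms(2)] Y_eig_eq_Y_orth[OF assms(2)]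
  by simp

end
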